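(* For every $t\ge1$ and all sequences $x^t\in\mathcal X^t$, $y^t\in\mathcal Y^t$, $$\log\frac{p_{\hat\theta}(x^t\mid y^t)}{p_U(x^t\mid y^t)}\le\frac{(|\mathcal X|-1)|\mathcal Y|}{2}\log\frac{t}{2\pi}+|\mathcal Y|\log\frac{\Gamma(1/2)^{|\mathcal X|}}{\Gamma(|\mathcal X|/2)}+\left(\frac{|\mathcal X|^2|\mathcal Y|}{4}+\frac{|\mathcal X||\mathcal Y|}{2}\right)\log e,$$ where $\hat\theta=\arg\max_{\theta'\in\Lambda}p_{\theta'}(x^t\mid y^t)$.
   Context: All logarithms are to base 2. $\mathcal X=\{1,\dots,|\mathcal X|\}$ and $\mathcal Y=\{1,\dots,|\mathcal Y|\}$ are finite alphabets. Let $\Lambda=\{\theta=(\theta_{ij})\in[0,1]^{|\mathcal X||\mathcal Y|}:\sum_{i=1}^{|\mathcal X|}\theta_{ij}=1 \text{ for } j=1,\dots,|\mathcal Y|\}$ be the set of conditional distributions of $x$ given $y$ ($\theta_{ij}$ playing the role of $\Pr\{X=i\mid Y=j\}$). For $\theta\in\Lambda$ define $p_\theta(x^t\mid y^t)=\prod_{k=1}^t\theta_{x_k y_k}$. Let $w$ be Jeffreys' prior on $\Lambda$: $w(\theta)=\frac{1}{B\sqrt{\prod_{i,j}\theta_{ij}}}$ with $B=\int_\Lambda\frac{d\theta}{\sqrt{\prod_{i,j}\theta_{ij}}}$, and define the mixture (universal) probability assignment $p_U(x^t\mid y^t)=\int_\Lambda w(\theta)\,p_\theta(x^t\mid y^t)\,d\theta$.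 *)

theory Defs
  imports "HOL-Analysis.Analysis" "HOL-Probability.Probability"
begin

text \<open>Alphabets: X = {1..a}, Y = {1..b}. A conditional distribution theta is a function
  theta i j = Pr(X = i | Y = j); only its values on {1..a} x {1..b} matter.\<close>

definition Lambda :: "nat \<Rightarrow> nat \<Rightarrow> (nat \<Rightarrow> nat \<Rightarrow> real) set" where
  "Lambda a b = {\<theta>. (\<forall>i\<in>{1..a}. \<forall>j\<in>{1..b}. 0 \<le> \<theta> i j \<and> \<theta> i j \<le> 1)
                    \<and> (\<forall>j\<in>{1..b}. (\<Sum>i=1..a. \<theta> i j) = 1)}"

definition p_cond :: "nat \<Rightarrow> (nat \<Rightarrow> nat) \<Rightarrow> (nat \<Rightarrow> nat) \<Rightarrow> (nat \<Rightarrow> nat \<Rightarrow> real) \<Rightarrow> real" where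
  "p_cond t x y \<theta> = (\<Prod>k=1..t. \<theta> (x k) (y k))"

text \<open>Lebesgue measure d theta on Lambda: coordinates theta_{ij}, i < a, are free,
  theta_{aj} = 1 - sum of the others.\<close>
definition free_coords :: "nat \<Rightarrow> nat \<Rightarrow> (nat \<times> nat) set" where
  "free_coords a b = {1..<a} \<times> {1..b}"

definition theta_of :: "nat \<Rightarrow> (nat \<times> nat \<Rightarrow> real) \<Rightarrow> nat \<Rightarrow> nat \<Rightarrow> real" where
  "theta_of a \<phi> = (\<lambda>i j. if i = a then 1 - (\<Sum>i'\<in>{1..<a}. \<phi> (i', j)) else \<phi> (i, j))"

definition param_measure :: "nat \<Rightarrow> nat \<Rightarrow> (nat \<times> nat \<Rightarrow> real) measure" where
  "param_measure a b = PiM (free_coords a b) (\<lambda>_. lborel)"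

definition jeffreys_density :: "nat \<Rightarrow> nat \<Rightarrow> (nat \<Rightarrow> nat \<Rightarrow> real) \<Rightarrow> real" where
  "jeffreys_density a b \<theta> =
     (if \<theta> \<in> Lambda a b then 1 / sqrt (\<Prod>i\<in>{1..a}. \<Prod>j\<in>{1..b}. \<theta> i j) else 0)"

definition p_U :: "nat \<Rightarrow> nat \<Rightarrow> nat \<Rightarrow> (nat \<Rightarrow> nat) \<Rightarrow> (nat \<Rightarrow> nat) \<Rightarrow> real" where
  "p_U a b t x y =
     (\<integral>\<phi>. jeffreys_density a b (theta_of a \<phi>) * p_cond t x y (theta_of a \<phi>) \<partial>param_measure a b)
     / (\<integral>\<phi>. jeffreys_density a b (theta_of a \<phi>) \<partial>param_measure a b)"

end

theory Submission
  imports Defs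
begin

text \<open>
  On the free coordinates, the Jeffreys density times the likelihood of the data is a product,
  over the values j of y, of Dirichlet kernels with exponents n_ij + 1/2, where n_ij
  counts the joint occurrences of (i, j). Integrating out one coordinate at a time (each step a
  Beta integral) gives p_U as a product over j of ratios of Gamma functions. By Gibbs'
  inequality the maximum likelihood of column j is at most the product of (n_ij / N_j)^n_ij.
  What remains is a per-column comparison of these two quantities, which follows from
  Stirling-type bounds on ln n!, obtained by telescoping elementary bounds on ln (1 + 1/m) and
  transferred to half-integers by the log-convexity of Gamma.
\<close>

section \<open>Dirichlet integrals\<close>

lemma nn_integral_beta_kernel:
  fixes p q r :: real
  assumes p: "p > 0" and q: "q > 0"
  shows "(\<integral>\<^sup>+y. ennreal (if 0 \<le> y \<and> y \<le> r then y powr (p-1) * (r-y) powr (q-1) else 0) \<partial>lborel)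
       = (if 0 \<le> r then ennreal (r powr (p+q-1) * Beta p q) else 0)"
proof (cases "r > 0")
  case False
  have "AE y in lborel. ennreal (if 0 \<le> y \<and> y \<le> r then y powr (p-1) * (r-y) powr (q-1) else 0) = 0"
    using AE_lborel_singleton[of 0] by eventually_elim (use False in auto)
  then have "(\<integral>\<^sup>+y. ennreal (if 0 \<le> y \<and> y \<le> r then y powr (p-1) * (r-y) powr (q-1) else 0) \<partial>lborel)
      = (\<integral>\<^sup>+(y::real). 0 \<partial>lborel)"
    by (rule nn_integral_cong_AE)
  then show ?thesis using False by simp
next
  case True
  have "(\<integral>\<^sup>+y. ennreal (if 0 \<le> y \<and> y \<le> r then y powr (p-1) * (r-y) powr (q-1) else 0) \<partial>lborel)
      = (\<integral>\<^sup>+y. ennreal (indicator {0..1} y * (r * y) powr (p - 1) * (r - r * y) powr (q - 1))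
           \<partial>distr lborel borel ((*) (1 / r)))" (is "_ = nn_integral _ ?f")
    using True by (subst nn_integral_distr) (auto simp: indicator_def field_simps intro!: nn_integral_cong)
  also have "distr lborel borel ((*) (1 / r)) = density lborel (\<lambda>_. r)"
    using True by (subst lborel_distr_mult) auto
  also have "nn_integral \<dots> ?f = (\<integral>\<^sup>+y. ennreal (indicator {0..1} y * (r * (r * y) powr (p - 1) *
       (r * (1 - y)) powr (q - 1))) \<partial>lborel)"
    using True by (subst nn_integral_density) (auto simp: ennreal_mult'[symmetric] algebra_simps)
  also have "\<dots> = (\<integral>\<^sup>+y. ennreal (r powr (p + q - 1)) *
       ennreal (indicator {0..1} y * y powr (p - 1) * (1 - y) powr (q - 1)) \<partial>lborel)"
    using True p q
    by (intro nn_integral_cong) (auto simp: indicator_def powr_mult powr_add powr_diff mult_ac ennreal_mult'[symmetric])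
  also have "\<dots> = ennreal (r powr (p + q - 1))
      * (\<integral>\<^sup>+y. ennreal (indicator {0..1} y * y powr (p - 1) * (1 - y) powr (q - 1)) \<partial>lborel)"
    by (subst nn_integral_cmult) auto
  also have "(\<integral>\<^sup>+y. ennreal (indicator {0..1} y * y powr (p - 1) * (1 - y) powr (q - 1)) \<partial>lborel) = Beta p q"
    using nn_integral_has_integral_lebesgue[OF _ has_integral_Beta_real[OF p q]]
    by (simp add: mult_ac)
  finally show ?thesis using True
    by (simp add: ennreal_mult'[symmetric] Beta_def)
qed

text \<open>The coordinates in S are the free ones; b is the exponent of the eliminated coordinate
  1 - sum \<phi> S.\<close>
definition dirichlet_kernel :: "'i set \<Rightarrow> ('i \<Rightarrow> real) \<Rightarrow> real \<Rightarrow> ('i \<Rightarrow> real) \<Rightarrow> real" where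
  "dirichlet_kernel S \<alpha> b \<phi> = (if (\<forall>i\<in>S. 0 \<le> \<phi> i) \<and> sum \<phi> S \<le> 1
     then (\<Prod>i\<in>S. \<phi> i powr (\<alpha> i - 1)) * (1 - sum \<phi> S) powr (b - 1) else 0)"

lemma dirichlet_kernel_measurable:
  assumes "finite S" "S \<subseteq> I"
  shows "(\<lambda>\<phi>. dirichlet_kernel S \<alpha> b \<phi>) \<in> borel_measurable (PiM I (\<lambda>_. lborel))"
proof -
  have [measurable]: "(\<lambda>\<phi>. \<phi> i) \<in> borel_measurable (PiM I (\<lambda>_. lborel))" if "i \<in> S" for i
    using that assms measurable_component_singleton[of i I "\<lambda>_. lborel"] by auto
  then have [measurable]: "(\<lambda>\<phi>. sum \<phi> S) \<in> borel_measurable (PiM I (\<lambda>_. lborel))"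
    and [measurable]: "(\<lambda>\<phi>. \<Prod>i\<in>S. \<phi> i powr (\<alpha> i - 1)) \<in> borel_measurable (PiM I (\<lambda>_. lborel))"
    and [measurable]: "Measurable.pred (PiM I (\<lambda>_. lborel)) (\<lambda>\<phi>. \<forall>i\<in>S. 0 \<le> (\<phi> i::real))"
    by (auto intro!: borel_measurable_sum borel_measurable_prod pred_intros_finite[OF assms(1)])
  show ?thesis unfolding dirichlet_kernel_def by measurable
qed

lemma dirichlet_kernel_nonneg: "dirichlet_kernel S \<alpha> b \<phi> \<ge> 0"
  unfolding dirichlet_kernel_def by (auto intro!: prod_nonneg mult_nonneg_nonneg)

lemma dirichlet_kernel_cong: "(\<And>i. i \<in> S \<Longrightarrow> \<phi> i = \<psi> i) \<Longrightarrow> dirichlet_kernel S \<alpha> b \<phi> = dirichlet_kernel S \<alpha> b \<psi>"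
  unfolding dirichlet_kernel_def by (simp cong: prod.cong sum.cong)

lemma dirichlet_kernel_empty: "dirichlet_kernel {} \<alpha> b \<phi> = 1"
  unfolding dirichlet_kernel_def by simp

lemma dirichlet_kernel_insert:
  assumes "finite S" "i \<notin> S"
  shows "dirichlet_kernel (insert i S) \<alpha> b (x(i:=y)) =
     (if 0 \<le> y \<and> y \<le> 1 - sum x S then y powr (\<alpha> i - 1) * ((1 - sum x S) - y) powr (b - 1) else 0)
     * (if (\<forall>k\<in>S. 0 \<le> x k) then (\<Prod>k\<in>S. x k powr (\<alpha> k - 1)) else 0)"
proof -
  have "(x(i:=y)) k = x k" if "k \<in> S" for k using that assms(2) by auto
  then have "sum (x(i:=y)) S = sum x S"
    and "(\<Prod>k\<in>S. (x(i:=y)) k powr (\<alpha> k - 1)) = (\<Prod>k\<in>S. x k powr (\<alpha> k - 1))"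
    and "(\<forall>k\<in>S. 0 \<le> (x(i:=y)) k) = (\<forall>k\<in>S. 0 \<le> x k)"
    by (auto intro!: sum.cong prod.cong)
  then show ?thesis using assms by (auto simp: dirichlet_kernel_def algebra_simps)
qed

lemma dirichlet_kernel_alt:
  "dirichlet_kernel S \<alpha> b x = (if 0 \<le> 1 - sum x S then (1 - sum x S) powr (b - 1) else 0)
     * (if (\<forall>k\<in>S. 0 \<le> x k) then (\<Prod>k\<in>S. x k powr (\<alpha> k - 1)) else 0)"
  unfolding dirichlet_kernel_def by auto

text \<open>Coordinates are grouped into blocks by col, each block carrying its own simplex; below the
  blocks are the columns of a conditional distribution.\<close>
definition block :: "'i set \<Rightarrow> ('i \<Rightarrow> 'j) \<Rightarrow> 'j \<Rightarrow> 'i set" where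
  "block I col j = {i\<in>I. col i = j}"

definition block_dirichlet_kernel :: "'i set \<Rightarrow> ('i \<Rightarrow> 'j) \<Rightarrow> ('i \<Rightarrow> real) \<Rightarrow> ('j \<Rightarrow> real) \<Rightarrow> 'j set \<Rightarrow> ('i \<Rightarrow> real) \<Rightarrow> real" where
  "block_dirichlet_kernel I col \<alpha> \<beta> J \<phi> = (\<Prod>j\<in>J. dirichlet_kernel (block I col j) \<alpha> (\<beta> j) \<phi>)"

definition block_dirichlet_const :: "'i set \<Rightarrow> ('i \<Rightarrow> 'j) \<Rightarrow> ('i \<Rightarrow> real) \<Rightarrow> ('j \<Rightarrow> real) \<Rightarrow> 'j set \<Rightarrow> real" where
  "block_dirichlet_const I col \<alpha> \<beta> J = (\<Prod>j\<in>J. (\<Prod>i\<in>block I col j. Gamma (\<alpha> i)) * Gamma (\<beta> j) / Gamma (sum \<alpha> (block I col j) + \<beta> j))"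

lemma block_dirichlet_kernel_nonneg: "block_dirichlet_kernel I col \<alpha> \<beta> J \<phi> \<ge> 0"
  unfolding block_dirichlet_kernel_def by (auto intro!: prod_nonneg dirichlet_kernel_nonneg)

lemma block_dirichlet_kernel_measurable:
  assumes "finite I"
  shows "(\<lambda>\<phi>. block_dirichlet_kernel I col \<alpha> \<beta> J \<phi>) \<in> borel_measurable (PiM I (\<lambda>_. lborel))"
  unfolding block_dirichlet_kernel_def
  by (intro borel_measurable_prod dirichlet_kernel_measurable) (use assms in \<open>auto simp: block_def\<close>)

text \<open>Integrating out coordinate i is a Beta integral over [0, 1 - (sum of the rest of its block)],
  which raises the exponent of the eliminated coordinate of the block by \<alpha> i.\<close>
lemma nn_integral_block_dirichlet_kernel_upd:
  fixes I :: "'i set" and J :: "'j set"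
  assumes I: "finite I" "i \<notin> I" and J: "finite J" "col i \<in> J"
    and pos: "\<alpha> i > 0" "\<beta> (col i) > 0"
  shows "(\<integral>\<^sup>+y. ennreal (block_dirichlet_kernel (insert i I) col \<alpha> \<beta> J (x(i:=y))) \<partial>lborel)
       = ennreal (Beta (\<alpha> i) (\<beta> (col i))
           * block_dirichlet_kernel I col \<alpha> (\<beta>(col i := \<alpha> i + \<beta> (col i))) J x)"
proof -
  define j0 where "j0 = col i"
  define S where "S = block I col j0"
  define r where "r = 1 - sum x S"
  define A where "A = (\<Prod>j\<in>J-{j0}. dirichlet_kernel (block I col j) \<alpha> (\<beta> j) x) *
       (if \<forall>k\<in>S. 0 \<le> x k then \<Prod>k\<in>S. x k powr (\<alpha> k - 1) else 0)"
  have S: "finite S" "i \<notin> S" using I by (auto simp: S_def block_def)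
  have A_nonneg: "A \<ge> 0"
    unfolding A_def by (auto intro!: mult_nonneg_nonneg prod_nonneg dirichlet_kernel_nonneg)
  have other_blocks: "(\<Prod>j\<in>J-{j0}. dirichlet_kernel (block I col j) \<alpha> (\<beta>' j) z)
      = (\<Prod>j\<in>J-{j0}. dirichlet_kernel (block I col j) \<alpha> (\<beta> j) x)"
    if "\<And>j. j \<noteq> j0 \<Longrightarrow> \<beta>' j = \<beta> j" "\<And>k. k \<noteq> i \<Longrightarrow> z k = x k" for \<beta>' z
    using that I by (intro prod.cong refl) (auto simp: block_def intro!: dirichlet_kernel_cong that(2))
  have blocks: "block (insert i I) col j = (if j = j0 then insert i S else block I col j)" for j
    by (auto simp: S_def block_def j0_def)
  have "block_dirichlet_kernel (insert i I) col \<alpha> \<beta> J (x(i:=y))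
      = dirichlet_kernel (insert i S) \<alpha> (\<beta> j0) (x(i:=y))
        * (\<Prod>j\<in>J-{j0}. dirichlet_kernel (block I col j) \<alpha> (\<beta> j) (x(i:=y)))" for y
    unfolding block_dirichlet_kernel_def using J by (subst prod.remove[of J j0]) (auto simp: j0_def blocks)
  then have integrand: "block_dirichlet_kernel (insert i I) col \<alpha> \<beta> J (x(i:=y))
      = A * (if 0 \<le> y \<and> y \<le> r then y powr (\<alpha> i - 1) * (r - y) powr (\<beta> j0 - 1) else 0)" for y
    using other_blocks[of \<beta> "x(i:=y)" for y] by (simp add: dirichlet_kernel_insert[OF S] A_def r_def mult_ac)
  have "block_dirichlet_kernel I col \<alpha> (\<beta>(j0 := \<alpha> i + \<beta> j0)) J x
      = dirichlet_kernel S \<alpha> (\<alpha> i + \<beta> j0) x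
        * (\<Prod>j\<in>J-{j0}. dirichlet_kernel (block I col j) \<alpha> ((\<beta>(j0 := \<alpha> i + \<beta> j0)) j) x)"
    unfolding block_dirichlet_kernel_def using J by (subst prod.remove[of J j0]) (auto simp: j0_def S_def)
  then have "block_dirichlet_kernel I col \<alpha> (\<beta>(j0 := \<alpha> i + \<beta> j0)) J x
      = A * (if 0 \<le> r then r powr (\<alpha> i + \<beta> j0 - 1) else 0)"
    using other_blocks[of "\<beta>(j0 := \<alpha> i + \<beta> j0)" x] by (simp add: dirichlet_kernel_alt A_def r_def mult_ac)
  moreover have "(\<integral>\<^sup>+y. ennreal (block_dirichlet_kernel (insert i I) col \<alpha> \<beta> J (x(i:=y))) \<partial>lborel)
      = ennreal A * (if 0 \<le> r then ennreal (r powr (\<alpha> i + \<beta> j0 - 1) * Beta (\<alpha> i) (\<beta> j0)) else 0)"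
    unfolding integrand using A_nonneg pos
    by (simp add: ennreal_mult' nn_integral_cmult nn_integral_beta_kernel j0_def)
  ultimately show ?thesis
    using A_nonneg pos unfolding j0_def[symmetric]
    by (auto simp: ennreal_mult'[symmetric] mult_ac Beta_def intro!: mult_nonneg_nonneg divide_nonneg_nonneg)
qed

lemma block_dirichlet_const_insert:
  fixes I :: "'i set" and J :: "'j set"
  assumes I: "finite I" "i \<notin> I" and J: "finite J" "col i \<in> J"
    and pos: "\<alpha> i > 0" "\<beta> (col i) > 0"
  shows "block_dirichlet_const (insert i I) col \<alpha> \<beta> J
       = Beta (\<alpha> i) (\<beta> (col i)) * block_dirichlet_const I col \<alpha> (\<beta>(col i := \<alpha> i + \<beta> (col i))) J"
proof -
  define j0 where "j0 = col i"
  define S where "S = block I col j0"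
  define P where "P = (\<Prod>k\<in>S. Gamma (\<alpha> k))"
  define Q where "Q = (\<Prod>j\<in>J-{j0}. (\<Prod>k\<in>block I col j. Gamma (\<alpha> k)) * Gamma (\<beta> j)
                                    / Gamma (sum \<alpha> (block I col j) + \<beta> j))"
  have S: "finite S" "i \<notin> S" using I by (auto simp: S_def block_def)
  have blocks: "block (insert i I) col j = (if j = j0 then insert i S else block I col j)" for j
    by (auto simp: block_def j0_def S_def)
  have "block_dirichlet_const (insert i I) col \<alpha> \<beta> J
      = Gamma (\<alpha> i) * P * Gamma (\<beta> j0) / Gamma (\<alpha> i + sum \<alpha> S + \<beta> j0) * Q"
    unfolding block_dirichlet_const_def Q_def P_def using J S
    by (subst prod.remove[of J j0]) (auto simp: blocks j0_def intro!: prod.cong)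
  moreover have "block_dirichlet_const I col \<alpha> (\<beta>(j0 := \<alpha> i + \<beta> j0)) J
      = P * Gamma (\<alpha> i + \<beta> j0) / Gamma (sum \<alpha> S + (\<alpha> i + \<beta> j0)) * Q"
    unfolding block_dirichlet_const_def Q_def P_def S_def using J
    by (subst prod.remove[of J j0]) (auto simp: j0_def intro!: prod.cong)
  moreover have "Gamma (\<alpha> i + \<beta> j0) > 0" using pos by (simp add: j0_def)
  ultimately show ?thesis
    unfolding Beta_def j0_def[symmetric] by (simp add: field_simps add_ac)
qed

lemma nn_integral_block_dirichlet_kernel:
  fixes I :: "'i set" and J :: "'j set"
  assumes "finite I" "finite J" "col ` I \<subseteq> J" "\<forall>i\<in>I. \<alpha> i > 0" "\<forall>j\<in>J. \<beta> j > 0"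
  shows "(\<integral>\<^sup>+\<phi>. ennreal (block_dirichlet_kernel I col \<alpha> \<beta> J \<phi>) \<partial>PiM I (\<lambda>_. lborel))
       = ennreal (block_dirichlet_const I col \<alpha> \<beta> J)"
  using assms
proof (induction I arbitrary: \<beta> rule: finite_induct)
  case empty
  have "block_dirichlet_const {} col \<alpha> \<beta> J = 1"
    unfolding block_dirichlet_const_def block_def using empty.prems
    by (intro prod.neutral) (force simp: Gamma_eq_zero_iff dest: nonpos_Ints_nonpos)
  then show ?case
    by (simp add: PiM_empty block_dirichlet_kernel_def block_def dirichlet_kernel_empty)
next
  case (insert i I)
  interpret product_sigma_finite "\<lambda>_. lborel::real measure" by standard
  define \<beta>' where "\<beta>' = \<beta>(col i := \<alpha> i + \<beta> (col i))"
  have pos: "col i \<in> J" "\<alpha> i > 0" "\<beta> (col i) > 0" using insert.prems by auto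
  then have Beta_nonneg: "Beta (\<alpha> i) (\<beta> (col i)) \<ge> 0" by (simp add: Beta_def)
  have "(\<integral>\<^sup>+\<phi>. ennreal (block_dirichlet_kernel (insert i I) col \<alpha> \<beta> J \<phi>) \<partial>PiM (insert i I) (\<lambda>_. lborel))
     = (\<integral>\<^sup>+x. (\<integral>\<^sup>+y. ennreal (block_dirichlet_kernel (insert i I) col \<alpha> \<beta> J (x(i:=y))) \<partial>lborel)
          \<partial>PiM I (\<lambda>_. lborel))"
    using insert.hyps
    by (intro product_nn_integral_insert) (auto intro!: measurable_compose[OF block_dirichlet_kernel_measurable])
  also have "\<dots> = (\<integral>\<^sup>+x. ennreal (Beta (\<alpha> i) (\<beta> (col i))) * ennreal (block_dirichlet_kernel I col \<alpha> \<beta>' J x)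
                      \<partial>PiM I (\<lambda>_. lborel))"
    unfolding \<beta>'_def
    by (intro nn_integral_cong) (simp add: nn_integral_block_dirichlet_kernel_upd[where \<alpha>=\<alpha> and \<beta>=\<beta> and col=col, OF insert.hyps insert.prems(1) pos]
        ennreal_mult Beta_nonneg block_dirichlet_kernel_nonneg)
  also have "\<dots> = ennreal (Beta (\<alpha> i) (\<beta> (col i)))
                    * (\<integral>\<^sup>+x. ennreal (block_dirichlet_kernel I col \<alpha> \<beta>' J x) \<partial>PiM I (\<lambda>_. lborel))"
    by (rule nn_integral_cmult)
       (intro measurable_compose[OF block_dirichlet_kernel_measurable] measurable_ennreal insert.hyps)
  also have "(\<integral>\<^sup>+x. ennreal (block_dirichlet_kernel I col \<alpha> \<beta>' J x) \<partial>PiM I (\<lambda>_. lborel))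
      = ennreal (block_dirichlet_const I col \<alpha> \<beta>' J)"
    using insert.prems pos by (intro insert.IH) (auto simp: \<beta>'_def)
  also have "ennreal (Beta (\<alpha> i) (\<beta> (col i))) * ennreal (block_dirichlet_const I col \<alpha> \<beta>' J)
      = ennreal (block_dirichlet_const (insert i I) col \<alpha> \<beta> J)"
    unfolding \<beta>'_def
    by (simp add: block_dirichlet_const_insert[where \<alpha>=\<alpha> and \<beta>=\<beta> and col=col, OF insert.hyps insert.prems(1) pos] ennreal_mult' Beta_nonneg)
  finally show ?case .
qed

section \<open>The Jeffreys mixture\<close>

definition joint_count :: "nat \<Rightarrow> (nat \<Rightarrow> nat) \<Rightarrow> (nat \<Rightarrow> nat) \<Rightarrow> nat \<Rightarrow> nat \<Rightarrow> nat" where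
  "joint_count t x y i j = card {k\<in>{1..t}. x k = i \<and> y k = j}"

lemma p_cond_eq_prod_joint_count:
  assumes "\<forall>k\<in>{1..t}. x k \<in> {1..a}" "\<forall>k\<in>{1..t}. y k \<in> {1..b}"
  shows "p_cond t x y \<theta> = (\<Prod>i\<in>{1..a}. \<Prod>j\<in>{1..b}. \<theta> i j ^ joint_count t x y i j)"
proof -
  have "p_cond t x y \<theta> = (\<Prod>ij\<in>{1..a}\<times>{1..b}. \<Prod>k\<in>{k. k \<in> {1..t} \<and> (x k, y k) = ij}. \<theta> (x k) (y k))"
    unfolding p_cond_def using assms by (intro prod.group[symmetric]) auto
  also have "\<dots> = (\<Prod>ij\<in>{1..a}\<times>{1..b}. \<theta> (fst ij) (snd ij) ^ joint_count t x y (fst ij) (snd ij))"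
  proof (intro prod.cong refl)
    fix ij :: "nat \<times> nat"
    have "(\<Prod>k\<in>{k. k \<in> {1..t} \<and> (x k, y k) = ij}. \<theta> (x k) (y k))
        = (\<Prod>k\<in>{k. k \<in> {1..t} \<and> (x k, y k) = ij}. \<theta> (fst ij) (snd ij))"
      by (intro prod.cong) auto
    then show "(\<Prod>k\<in>{k. k \<in> {1..t} \<and> (x k, y k) = ij}. \<theta> (x k) (y k))
        = \<theta> (fst ij) (snd ij) ^ joint_count t x y (fst ij) (snd ij)"
      unfolding joint_count_def by (simp add: prod_eq_iff)
  qed
  also have "\<dots> = (\<Prod>i\<in>{1..a}. \<Prod>j\<in>{1..b}. \<theta> i j ^ joint_count t x y i j)"
    unfolding prod.cartesian_product by (simp add: case_prod_unfold)
  finally show ?thesis .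
qed

lemma sum_joint_count_le:
  assumes "\<forall>k\<in>{1..t}. x k \<in> {1..a}"
  shows "(\<Sum>i\<in>{1..a}. joint_count t x y i j) \<le> t"
proof -
  define S where "S = {k\<in>{1..t}. y k = j}"
  have "(\<Sum>i\<in>{1..a}. joint_count t x y i j) = (\<Sum>i\<in>{1..a}. \<Sum>k\<in>{k. k \<in> S \<and> x k = i}. (1::nat))"
    unfolding joint_count_def S_def by (intro sum.cong refl) (simp add: conj_commute conj_left_commute)
  also have "\<dots> = card S"
    using assms by (subst sum.group) (auto simp: S_def)
  also have "\<dots> \<le> card {1..t}" by (intro card_mono) (auto simp: S_def)
  finally show ?thesis by simp
qed

lemma sum_theta_of:
  assumes "a \<ge> 1"
  shows "(\<Sum>i=1..a. theta_of a \<phi> i j) = 1"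
proof -
  have "{1..a} = insert a {1..<a}" using assms by auto
  then have "(\<Sum>i=1..a. theta_of a \<phi> i j) = theta_of a \<phi> a j + (\<Sum>i\<in>{1..<a}. theta_of a \<phi> i j)"
    by simp
  also have "(\<Sum>i\<in>{1..<a}. theta_of a \<phi> i j) = (\<Sum>i\<in>{1..<a}. \<phi> (i, j))"
    by (intro sum.cong) (auto simp: theta_of_def)
  finally show ?thesis by (simp add: theta_of_def)
qed

lemma theta_of_in_Lambda_iff:
  assumes "a \<ge> 1"
  shows "theta_of a \<phi> \<in> Lambda a b \<longleftrightarrow> (\<forall>j\<in>{1..b}. \<forall>i\<in>{1..a}. 0 \<le> theta_of a \<phi> i j)"
proof
  assume nonneg: "\<forall>j\<in>{1..b}. \<forall>i\<in>{1..a}. 0 \<le> theta_of a \<phi> i j"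
  have "theta_of a \<phi> i j \<le> 1" if "i \<in> {1..a}" "j \<in> {1..b}" for i j
  proof -
    have "theta_of a \<phi> i j \<le> (\<Sum>i=1..a. theta_of a \<phi> i j)"
      using nonneg that by (intro member_le_sum) auto
    then show ?thesis using sum_theta_of[OF assms] by simp
  qed
  then show "theta_of a \<phi> \<in> Lambda a b"
    using nonneg sum_theta_of[OF assms] unfolding Lambda_def by auto
qed (auto simp: Lambda_def)

lemma real_sqrt_prod: "sqrt (prod f A) = (\<Prod>x\<in>A. sqrt (f x))"
  by (induction A rule: infinite_finite_induct) (auto simp: real_sqrt_mult)

lemma power_div_sqrt_eq_powr: "(z::real) \<ge> 0 \<Longrightarrow> z ^ m / sqrt z = z powr (real m - 1/2)"
  by (cases "z = 0") (simp_all add: powr_diff powr_realpow powr_half_sqrt[symmetric])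

lemma block_free_coords: "j \<in> {1..b} \<Longrightarrow> block (free_coords a b) snd j = {1..<a} \<times> {j}"
  unfolding block_def free_coords_def by auto

lemma dirichlet_kernel_theta_of:
  assumes "a \<ge> 1"
  shows "dirichlet_kernel ({1..<a} \<times> {j}) (\<lambda>ij. real (m (fst ij) (snd ij)) + 1/2) (real (m a j) + 1/2) \<phi>
    = (if \<forall>i\<in>{1..a}. 0 \<le> theta_of a \<phi> i j
       then (\<Prod>i\<in>{1..a}. theta_of a \<phi> i j powr (real (m i j) - 1/2)) else 0)"
proof -
  have inj: "inj_on (\<lambda>i. (i, j)) {1..<a}" by (auto simp: inj_on_def)
  have img: "{1..<a} \<times> {j} = (\<lambda>i. (i, j)) ` {1..<a}" by auto
  have theta_free: "theta_of a \<phi> i j = \<phi> (i, j)" if "i \<in> {1..<a}" for i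
    using that by (simp add: theta_of_def)
  have sum_eq: "sum \<phi> ({1..<a} \<times> {j}) = (\<Sum>i\<in>{1..<a}. \<phi> (i, j))"
    unfolding img by (subst sum.reindex[OF inj]) simp
  have prod_eq: "(\<Prod>ij\<in>{1..<a} \<times> {j}. \<phi> ij powr (real (m (fst ij) (snd ij)) + 1/2 - 1))
      = (\<Prod>i\<in>{1..<a}. theta_of a \<phi> i j powr (real (m i j) - 1/2))"
    unfolding img by (subst prod.reindex[OF inj]) (auto intro!: prod.cong simp: theta_free)
  have nonneg_eq: "(\<forall>ij\<in>{1..<a} \<times> {j}. 0 \<le> \<phi> ij) = (\<forall>i\<in>{1..<a}. 0 \<le> theta_of a \<phi> i j)"
    using theta_free by auto
  have "{1..a} = insert a {1..<a}" using assms by auto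
  then show ?thesis
    unfolding dirichlet_kernel_def sum_eq prod_eq nonneg_eq by (auto simp: theta_of_def mult_ac)
qed

lemma jeffreys_density_mult_monomial:
  assumes "a \<ge> 1"
  shows "jeffreys_density a b (theta_of a \<phi>) * (\<Prod>i\<in>{1..a}. \<Prod>j\<in>{1..b}. theta_of a \<phi> i j ^ m i j)
    = block_dirichlet_kernel (free_coords a b) snd (\<lambda>ij. real (m (fst ij) (snd ij)) + 1/2)
        (\<lambda>j. real (m a j) + 1/2) {1..b} \<phi>"
proof -
  define \<theta> where "\<theta> = theta_of a \<phi>"
  have kernel_eq: "block_dirichlet_kernel (free_coords a b) snd (\<lambda>ij. real (m (fst ij) (snd ij)) + 1/2)
        (\<lambda>j. real (m a j) + 1/2) {1..b} \<phi>
     = (\<Prod>j\<in>{1..b}. if \<forall>i\<in>{1..a}. 0 \<le> \<theta> i j then (\<Prod>i\<in>{1..a}. \<theta> i j powr (real (m i j) - 1/2)) else 0)"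
    unfolding block_dirichlet_kernel_def \<theta>_def
    by (intro prod.cong refl) (simp only: block_free_coords dirichlet_kernel_theta_of[OF assms])
  show ?thesis
  proof (cases "\<theta> \<in> Lambda a b")
    case True
    then have nonneg: "\<forall>j\<in>{1..b}. \<forall>i\<in>{1..a}. 0 \<le> \<theta> i j"
      using theta_of_in_Lambda_iff[OF assms] \<theta>_def by simp
    have "jeffreys_density a b \<theta> * (\<Prod>i\<in>{1..a}. \<Prod>j\<in>{1..b}. \<theta> i j ^ m i j)
       = (\<Prod>i\<in>{1..a}. \<Prod>j\<in>{1..b}. \<theta> i j ^ m i j / sqrt (\<theta> i j))"
      using True unfolding jeffreys_density_def by (simp add: real_sqrt_prod prod_dividef)
    also have "\<dots> = (\<Prod>j\<in>{1..b}. \<Prod>i\<in>{1..a}. \<theta> i j powr (real (m i j) - 1/2))"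
      using nonneg by (subst prod.swap) (intro prod.cong refl, simp add: power_div_sqrt_eq_powr)
    finally show ?thesis unfolding kernel_eq using nonneg \<theta>_def by simp
  next
    case False
    then obtain j i where "j \<in> {1..b}" "i \<in> {1..a}" "\<not> 0 \<le> \<theta> i j"
      using theta_of_in_Lambda_iff[OF assms] \<theta>_def by auto
    then show ?thesis
      using False unfolding kernel_eq jeffreys_density_def \<theta>_def by (auto intro!: prod_zero bexI[of _ j])
  qed
qed

text \<open>The integral of the product of \<theta>_i powr (n_i - 1/2) over the simplex, i.e. the normalising
  constant of the Dirichlet distribution with parameters n_i + 1/2.\<close>
definition half_dirichlet_mass :: "nat \<Rightarrow> (nat \<Rightarrow> nat) \<Rightarrow> real" where
  "half_dirichlet_mass a n =
     (\<Prod>i\<in>{1..a}. Gamma (real (n i) + 1/2)) / Gamma (real (sum n {1..a}) + real a / 2)"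

lemma half_dirichlet_mass_pos: "a \<ge> 1 \<Longrightarrow> half_dirichlet_mass a n > 0"
  unfolding half_dirichlet_mass_def
  by (intro divide_pos_pos prod_pos Gamma_real_pos) (auto intro!: add_nonneg_pos sum_nonneg)

lemma block_dirichlet_const_free_coords:
  assumes "a \<ge> 1"
  shows "block_dirichlet_const (free_coords a b) snd (\<lambda>ij. real (m (fst ij) (snd ij)) + 1/2)
           (\<lambda>j. real (m a j) + 1/2) {1..b}
     = (\<Prod>j\<in>{1..b}. half_dirichlet_mass a (\<lambda>i. m i j))"
  unfolding block_dirichlet_const_def
proof (intro prod.cong refl)
  fix j assume j: "j \<in> {1..b}"
  have inj: "inj_on (\<lambda>i. (i, j)) {1..<a}" by (auto simp: inj_on_def)
  have img: "{1..<a} \<times> {j} = (\<lambda>i. (i, j)) ` {1..<a}" by auto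
  have ins: "{1..a} = insert a {1..<a}" using assms by auto
  have prod_eq: "(\<Prod>ij\<in>{1..<a} \<times> {j}. Gamma (real (m (fst ij) (snd ij)) + 1/2))
      = (\<Prod>i\<in>{1..<a}. Gamma (real (m i j) + 1/2))"
    unfolding img by (subst prod.reindex[OF inj]) simp
  have sum_eq: "(\<Sum>ij\<in>{1..<a} \<times> {j}. real (m (fst ij) (snd ij)) + 1/2) + (real (m a j) + 1/2)
      = real (\<Sum>i\<in>{1..a}. m i j) + real a / 2"
    unfolding img ins using assms
    by (subst sum.reindex[OF inj]) (simp add: sum.distrib of_nat_diff, simp add: field_simps)
  show "(\<Prod>i\<in>block (free_coords a b) snd j. Gamma (real (m (fst i) (snd i)) + 1 / 2))
        * Gamma (real (m a j) + 1 / 2)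
        / Gamma ((\<Sum>i\<in>block (free_coords a b) snd j. real (m (fst i) (snd i)) + 1 / 2) + (real (m a j) + 1 / 2))
      = half_dirichlet_mass a (\<lambda>i. m i j)"
    unfolding block_free_coords[OF j] prod_eq sum_eq half_dirichlet_mass_def ins by (simp add: mult_ac)
qed

lemma integral_jeffreys_density_mult_monomial:
  assumes "a \<ge> 1"
  shows "(\<integral>\<phi>. jeffreys_density a b (theta_of a \<phi>) * (\<Prod>i\<in>{1..a}. \<Prod>j\<in>{1..b}. theta_of a \<phi> i j ^ m i j)
            \<partial>param_measure a b)
     = (\<Prod>j\<in>{1..b}. half_dirichlet_mass a (\<lambda>i. m i j))"
proof -
  let ?\<alpha> = "\<lambda>ij. real (m (fst ij) (snd ij)) + 1/2" and ?\<beta> = "\<lambda>j. real (m a j) + 1/2"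
  have fin: "finite (free_coords a b)" by (simp add: free_coords_def)
  have "(\<integral>\<phi>. jeffreys_density a b (theta_of a \<phi>) * (\<Prod>i\<in>{1..a}. \<Prod>j\<in>{1..b}. theta_of a \<phi> i j ^ m i j)
           \<partial>param_measure a b)
      = enn2real (\<integral>\<^sup>+\<phi>. ennreal (block_dirichlet_kernel (free_coords a b) snd ?\<alpha> ?\<beta> {1..b} \<phi>) \<partial>param_measure a b)"
    unfolding jeffreys_density_mult_monomial[OF assms] param_measure_def
    by (intro integral_eq_nn_integral block_dirichlet_kernel_measurable fin AE_I2 block_dirichlet_kernel_nonneg)
  also have "(\<integral>\<^sup>+\<phi>. ennreal (block_dirichlet_kernel (free_coords a b) snd ?\<alpha> ?\<beta> {1..b} \<phi>) \<partial>param_measure a b)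
      = ennreal (\<Prod>j\<in>{1..b}. half_dirichlet_mass a (\<lambda>i. m i j))"
    unfolding param_measure_def block_dirichlet_const_free_coords[OF assms, symmetric]
    by (intro nn_integral_block_dirichlet_kernel fin) (auto simp: free_coords_def add_pos_nonneg)
  finally show ?thesis
    using half_dirichlet_mass_pos[OF assms] by (simp add: less_imp_le prod_nonneg)
qed

lemma p_U_eq_prod_half_dirichlet_mass:
  assumes "a \<ge> 1" "\<forall>k\<in>{1..t}. x k \<in> {1..a}" "\<forall>k\<in>{1..t}. y k \<in> {1..b}"
  shows "p_U a b t x y = (\<Prod>j\<in>{1..b}. half_dirichlet_mass a (\<lambda>i. joint_count t x y i j)
                                        / half_dirichlet_mass a (\<lambda>_. 0))"
  using integral_jeffreys_density_mult_monomial[OF assms(1), of b "joint_count t x y"]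
    integral_jeffreys_density_mult_monomial[OF assms(1), of b "\<lambda>_ _. 0"]
  unfolding p_U_def by (simp add: p_cond_eq_prod_joint_count[OF assms(2,3)] prod_dividef)


section \<open>Maximum likelihood\<close>

text \<open>The likelihood of a column at its maximiser \<theta>_i = n_i / N.\<close>
definition empirical_likelihood :: "nat \<Rightarrow> (nat \<Rightarrow> nat) \<Rightarrow> real" where
  "empirical_likelihood a n = (\<Prod>i\<in>{1..a}. (real (n i) / real (sum n {1..a})) ^ n i)"

lemma empirical_likelihood_pos: "empirical_likelihood a n > 0"
  unfolding empirical_likelihood_def
proof (intro prod_pos)
  fix i assume "i \<in> {1..a}"
  then have "n i \<le> sum n {1..a}" by (intro member_le_sum) auto
  then have "n i > 0 \<Longrightarrow> real (sum n {1..a}) > 0" by linarith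
  then show "(real (n i) / real (sum n {1..a})) ^ n i > 0"
    by (cases "n i = 0") (auto simp del: of_nat_sum)
qed

lemma ln_empirical_likelihood:
  "ln (empirical_likelihood a n) = (\<Sum>i\<in>{1..a}. real (n i) * ln (real (n i) / real (sum n {1..a})))"
proof -
  have "empirical_likelihood a n \<noteq> 0" using empirical_likelihood_pos[of a n] by simp
  then have "(real (n i) / real (sum n {1..a})) ^ n i \<noteq> 0" if "i \<in> {1..a}" for i
    using that unfolding empirical_likelihood_def by (auto simp: prod_zero_iff)
  then show ?thesis
    unfolding empirical_likelihood_def by (subst ln_prod) (auto simp: ln_realpow)
qed

lemma ln_half_dirichlet_mass:
  assumes "a \<ge> 1"
  shows "ln (half_dirichlet_mass a n) = (\<Sum>i\<in>{1..a}. ln (Gamma (real (n i) + 1/2)))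
           - ln (Gamma (real (sum n {1..a}) + real a / 2))"
proof -
  have "(\<Prod>i\<in>{1..a}. Gamma (real (n i) + 1/2)) > 0" by (intro prod_pos) auto
  moreover have "Gamma (real (sum n {1..a}) + real a / 2) > 0"
    using assms by (intro Gamma_real_pos) (auto intro!: add_nonneg_pos sum_nonneg)
  moreover have "ln (\<Prod>i\<in>{1..a}. Gamma (real (n i) + 1/2)) = (\<Sum>i\<in>{1..a}. ln (Gamma (real (n i) + 1/2)))"
    by (subst ln_prod) (auto simp: Gamma_eq_zero_iff dest!: nonpos_Ints_nonpos)
  ultimately show ?thesis
    unfolding half_dirichlet_mass_def by (simp add: ln_divide_pos)
qed

text \<open>Gibbs' inequality: apply ln x \<le> x - 1 to \<theta>_i N / n_i.\<close>
lemma prod_power_le_empirical_pos: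
  fixes \<theta> :: "'a \<Rightarrow> real" and n :: "'a \<Rightarrow> nat"
  assumes B: "finite B" and pos: "\<forall>i\<in>B. \<theta> i > 0" "\<forall>i\<in>B. n i > 0" and sum_le: "sum \<theta> B \<le> 1"
  shows "(\<Prod>i\<in>B. \<theta> i ^ n i) \<le> (\<Prod>i\<in>B. (real (n i) / real (sum n B)) ^ n i)"
proof (cases "B = {}")
  case False
  define N where "N = real (sum n B)"
  have N: "N > 0"
    using False B pos(2) unfolding N_def by (auto simp: sum_pos2 intro!: sum_pos2)
  have "ln (\<Prod>i\<in>B. \<theta> i ^ n i) = (\<Sum>i\<in>B. real (n i) * ln (\<theta> i))"
    using B pos by (subst ln_prod) (auto simp: ln_realpow)
  moreover have "ln (\<Prod>i\<in>B. (real (n i) / N) ^ n i) = (\<Sum>i\<in>B. real (n i) * (ln (real (n i)) - ln N))"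
    using B pos N by (subst ln_prod) (auto simp: ln_realpow ln_div)
  moreover have "real (n i) * ln (\<theta> i) - real (n i) * (ln (real (n i)) - ln N)
      = real (n i) * ln (\<theta> i * N / real (n i))" if "i \<in> B" for i
  proof -
    have "\<theta> i > 0" "n i > 0" using pos that by auto
    then have "ln (\<theta> i * N / real (n i)) = ln (\<theta> i) + ln N - ln (real (n i))"
      using N by (simp add: ln_div ln_mult)
    then show ?thesis by (simp add: right_diff_distrib distrib_left)
  qed
  ultimately have "ln (\<Prod>i\<in>B. \<theta> i ^ n i) - ln (\<Prod>i\<in>B. (real (n i) / N) ^ n i)
      = (\<Sum>i\<in>B. real (n i) * ln (\<theta> i * N / real (n i)))"
    by (simp add: sum_subtractf[symmetric])
  also have "\<dots> \<le> (\<Sum>i\<in>B. real (n i) * (\<theta> i * N / real (n i) - 1))"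
    using pos N by (intro sum_mono mult_left_mono ln_le_minus_one) auto
  also have "\<dots> = (\<Sum>i\<in>B. \<theta> i * N - real (n i))"
    using pos(2) by (intro sum.cong refl) (auto simp: field_simps)
  also have "\<dots> = N * sum \<theta> B - N"
    by (simp add: sum_subtractf sum_distrib_right[symmetric] N_def mult.commute)
  also have "\<dots> \<le> 0" using N sum_le by (simp add: mult_le_cancel_left1)
  finally show ?thesis
    using pos N unfolding N_def[symmetric] by (simp add: prod_pos)
qed simp

lemma prod_power_le_empirical:
  fixes \<theta> :: "'a \<Rightarrow> real" and n :: "'a \<Rightarrow> nat"
  assumes A: "finite A" and nonneg: "\<forall>i\<in>A. 0 \<le> \<theta> i" and sum_le: "sum \<theta> A \<le> 1"
  shows "(\<Prod>i\<in>A. \<theta> i ^ n i) \<le> (\<Prod>i\<in>A. (real (n i) / real (sum n A)) ^ n i)"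
proof -
  define B where "B = {i\<in>A. n i > 0}"
  have B: "B \<subseteq> A" "finite B" using A by (auto simp: B_def)
  have restrict: "(\<Prod>i\<in>A. f i ^ n i) = (\<Prod>i\<in>B. f i ^ n i)" for f :: "'a \<Rightarrow> real"
    using A by (intro prod.mono_neutral_right) (auto simp: B_def)
  have "sum n A = sum n B"
    using A by (intro sum.mono_neutral_right) (auto simp: B_def)
  moreover have "(\<Prod>i\<in>B. \<theta> i ^ n i) \<le> (\<Prod>i\<in>B. (real (n i) / real (sum n B)) ^ n i)"
  proof (cases "\<exists>i\<in>B. \<theta> i = 0")
    case True
    then show ?thesis using B by (auto simp: B_def prod_zero intro!: prod_nonneg zero_le_power divide_nonneg_nonneg sum_nonneg)
  next
    case False
    have "sum \<theta> B \<le> sum \<theta> A" using A B nonneg by (intro sum_mono2) auto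
    then show ?thesis
      using False B nonneg sum_le
      by (intro prod_power_le_empirical_pos) (force simp: B_def order.order_iff_strict)+
  qed
  ultimately show ?thesis unfolding restrict[of \<theta>] restrict[of "\<lambda>i. real (n i) / real (sum n A)"] by simp
qed

lemma p_cond_le_prod_empirical_likelihood:
  assumes "\<forall>k\<in>{1..t}. x k \<in> {1..a}" "\<forall>k\<in>{1..t}. y k \<in> {1..b}" and "\<theta> \<in> Lambda a b"
  shows "p_cond t x y \<theta> \<le> (\<Prod>j\<in>{1..b}. empirical_likelihood a (\<lambda>i. joint_count t x y i j))"
proof -
  have "p_cond t x y \<theta> = (\<Prod>j\<in>{1..b}. \<Prod>i\<in>{1..a}. \<theta> i j ^ joint_count t x y i j)"
    unfolding p_cond_eq_prod_joint_count[OF assms(1,2)] by (rule prod.swap)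
  also have "\<dots> \<le> (\<Prod>j\<in>{1..b}. empirical_likelihood a (\<lambda>i. joint_count t x y i j))"
    using assms(3) unfolding empirical_likelihood_def Lambda_def
    by (intro prod_mono conjI prod_nonneg prod_power_le_empirical) auto
  finally show ?thesis .
qed


section \<open>Bounds on ln Gamma\<close>

lemma ln_add_one_ge_pade:
  fixes y :: real assumes "y \<ge> 0" shows "2*y/(2+y) \<le> ln (1+y)"
proof -
  let ?f = "\<lambda>z::real. ln (1+z) - 2*z/(2+z)"
  have "?f 0 \<le> ?f y"
  proof (rule DERIV_nonneg_imp_increasing_open[OF assms])
    fix z :: real assume z: "0 < z" "z < y"
    have "(?f has_real_derivative (1/(1+z) - 4/(2+z)^2)) (at z)"
      using z by (auto intro!: derivative_eq_intros simp: field_simps power2_eq_square)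
    moreover have "1/(1+z) - 4/(2+z)^2 \<ge> 0"
    proof -
      have "1/(1+z) - 4/(2+z)^2 = (1 * (2+z)^2 - 4 * (1+z)) / ((1+z) * (2+z)^2)"
        using z by (subst diff_frac_eq) auto
      also have "1 * (2+z)^2 - 4 * (1+z) = z^2" by (simp add: power2_eq_square algebra_simps)
      finally show ?thesis using z by simp
    qed
    ultimately show "\<exists>d. (?f has_real_derivative d) (at z) \<and> d \<ge> 0" by blast
  next
    show "continuous_on {0..y} ?f" by (intro continuous_intros) auto
  qed
  then show ?thesis by simp
qed

lemma ln_add_one_le_cubic:
  fixes y :: real assumes "y \<ge> 0" shows "ln (1+y) \<le> y - y^2/2 + y^3/3"
proof -
  let ?f = "\<lambda>z::real. z - z^2/2 + z^3/3 - ln (1+z)"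
  have "?f 0 \<le> ?f y"
  proof (rule DERIV_nonneg_imp_increasing_open[OF assms])
    fix z :: real assume z: "0 < z" "z < y"
    have "(?f has_real_derivative (1 - z + z^2 - 1/(1+z))) (at z)"
      using z by (auto intro!: derivative_eq_intros simp: field_simps power2_eq_square)
    moreover have "1 - z + z^2 - 1/(1+z) \<ge> 0"
    proof -
      have "1 - z + z^2 - 1/(1+z) = ((1 - z + z^2) * (1+z) - 1) / (1+z)"
        using z by (simp add: field_simps)
      also have "(1 - z + z^2) * (1+z) - 1 = z^3" by (simp add: power2_eq_square power3_eq_cube algebra_simps)
      finally show ?thesis using z by simp
    qed
    ultimately show "\<exists>d. (?f has_real_derivative d) (at z) \<and> d \<ge> 0" by blast
  next
    show "continuous_on {0..y} ?f" by (intro continuous_intros) auto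
  qed
  then show ?thesis by simp
qed


lemma ln_one_plus_inverse: "(m::real) > 0 \<Longrightarrow> ln (1 + 1/m) = ln (m+1) - ln m"
  by (simp add: ln_divide_pos[symmetric] field_simps)

lemma ln_Suc_diff_ge:
  fixes m :: real assumes m: "m \<ge> 1"
  shows "1 \<le> (m + 1/2) * (ln (m+1) - ln m)"
proof -
  have "1 = (m + 1/2) * (2*(1/m)/(2+1/m))" using m by (simp add: field_simps)
  also have "\<dots> \<le> (m + 1/2) * ln (1 + 1/m)"
    using m by (intro mult_left_mono ln_add_one_ge_pade) auto
  also have "ln (1 + 1/m) = ln (m+1) - ln m"
    using m by (simp add: ln_one_plus_inverse)
  finally show ?thesis .
qed
lemma ln_Suc_diff_le:
  fixes m :: real assumes m: "m \<ge> 1"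
  shows "(m + 1/2) * (ln (m+1) - ln m) \<le> 1 + 1/(2*m) - 1/(2*(m+1))"
proof -
  have "ln (m+1) - ln m = ln (1 + 1/m)"
    using m by (simp add: ln_one_plus_inverse)
  also have "\<dots> \<le> 1/m - (1/m)^2/2 + (1/m)^3/3"
    using m by (intro ln_add_one_le_cubic) auto
  finally have "(m + 1/2) * (ln (m+1) - ln m) \<le> (m + 1/2) * (1/m - (1/m)^2/2 + (1/m)^3/3)"
    using m by (intro mult_left_mono) auto
  also have "\<dots> = 1 + (m + 2) / (12 * m^3)"
    using m by (simp add: field_simps power2_eq_square power3_eq_cube)
  also have "\<dots> \<le> 1 + 1 / (2 * m * (m + 1))"
  proof -
    have "m \<le> m * m" "m * m \<le> m * (m * m)"
      using m by (simp_all add: mult_le_cancel_left1)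
    then have "(m + 2) * (2 * m * (m + 1)) \<le> 12 * m^3"
      by (simp add: power3_eq_cube algebra_simps)
    then show ?thesis using m by (simp add: frac_le_eq divide_le_0_iff mult_ac)
  qed
  also have "\<dots> = 1 + 1/(2*m) - 1/(2*(m+1))"
    using m by (simp add: divide_simps) (simp add: algebra_simps)
  finally show ?thesis .
qed

text \<open>The two lemmas above bound the increments of ln n! - ((n + 1/2) ln n - n); telescoping
  gives Stirling's formula up to the constants.\<close>
lemma ln_fact_le:
  fixes n :: nat assumes "n \<ge> 1"
  shows "ln (fact n) \<le> 1 + (real n + 1/2) * ln (real n) - real n"
  using assms
proof (induction n rule: dec_induct)
  case base then show ?case by simp
next
  case (step n)
  have n: "real n \<ge> 1" using step by simp
  have "ln (fact (Suc n)) = ln (fact n) + ln (real n + 1)"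
    by (simp add: ln_mult add.commute)
  also have "\<dots> \<le> 1 + (real n + 1/2) * ln (real n) - real n + ln (real n + 1)"
    using step.IH by simp
  also have "\<dots> \<le> 1 + (real (Suc n) + 1/2) * ln (real (Suc n)) - real (Suc n)"
    using ln_Suc_diff_ge[OF n] by (simp add: algebra_simps)
  finally show ?case .
qed

lemma ln_fact_ge:
  fixes n :: nat assumes "n \<ge> 1"
  shows "1/2 + 1/(2 * real n) + (real n + 1/2) * ln (real n) - real n \<le> ln (fact n)"
  using assms
proof (induction n rule: dec_induct)
  case base then show ?case by simp
next
  case (step n)
  have n: "real n \<ge> 1" using step by simp
  have "ln (fact (Suc n)) = ln (fact n) + ln (real n + 1)"
    by (simp add: ln_mult add.commute)
  moreover have "1/2 + 1/(2 * real n) + (real n + 1/2) * ln (real n) - real n + ln (real n + 1) \<le> ln (fact n) + ln (real n + 1)"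
    using step.IH by simp
  moreover have "1/2 + 1/(2 * real (Suc n)) + (real (Suc n) + 1/2) * ln (real (Suc n)) - real (Suc n)
      \<le> 1/2 + 1/(2 * real n) + (real n + 1/2) * ln (real n) - real n + ln (real n + 1)"
    using ln_Suc_diff_le[OF n] by (simp add: algebra_simps)
  ultimately show ?case by linarith
qed


lemma ln_Gamma_midpoint_le:
  fixes x y :: real assumes "x > 0" "y > 0"
  shows "ln (Gamma ((x+y)/2)) \<le> (ln (Gamma x) + ln (Gamma y))/2"
proof -
  have "(ln \<circ> Gamma) ((1 - 1/2) *\<^sub>R x + (1/2) *\<^sub>R y) \<le> (1 - 1/2) * (ln \<circ> Gamma) x + (1/2) * (ln \<circ> Gamma) y"
    using assms by (intro convex_onD[OF log_convex_Gamma_real]) auto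
  then show ?thesis by (simp add: add_divide_distrib)
qed

lemma ln_Gamma_plus1:
  fixes x :: real assumes "x > 0" shows "ln (Gamma (x + 1)) = ln x + ln (Gamma x)"
proof -
  have "x \<notin> \<int>\<^sub>\<le>\<^sub>0" using assms by (auto dest: nonpos_Ints_nonpos)
  then show ?thesis using assms by (simp add: Gamma_plus1 ln_mult_pos)
qed

lemma ln_Gamma_half_integer_ge:
  fixes n :: nat
  shows "ln (5/4) + real n * ln (real n) - real n \<le> ln (Gamma (real n + 1/2))"
proof (cases "n = 0")
  case True
  have "(5/4::real)^2 \<le> pi" using pi_gt3 by (simp add: power2_eq_square)
  then have "5/4 \<le> sqrt pi" by (rule real_le_rsqrt)
  then show ?thesis using True by (simp add: Gamma_one_half_real)
next
  case False
  then have n: "real n \<ge> 1" by simp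
  have "ln (fact n) \<le> (ln (Gamma (real n + 1/2)) + ln (Gamma (real n + 1/2 + 1)))/2"
    using ln_Gamma_midpoint_le[of "real n + 1/2" "real n + 1/2 + 1"]
    by (simp add: add_divide_distrib Gamma_fact)
  then have midpoint: "ln (fact n) \<le> ln (Gamma (real n + 1/2)) + ln (real n + 1/2) / 2"
    using ln_Gamma_plus1[of "real n + 1/2"] by simp
  have "ln (real n + 1/2) - ln (real n) \<le> ln (3/2)"
    using n by (simp add: ln_divide_pos[symmetric] field_simps)
  moreover have "ln (3/2) + 2 * ln (5/4) \<le> (1::real)"
  proof -
    have "ln (3/2) + 2 * ln (5/4) = ln ((3/2) * (5/4)^2 :: real)"
      by (subst ln_mult_pos) (auto simp: ln_realpow)
    also have "\<dots> \<le> ln (exp 1)"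
      using exp_lower_Taylor_quadratic[of 1] by (intro ln_mono) (auto simp: power2_eq_square)
    finally show ?thesis by simp
  qed
  moreover have "0 \<le> 1 / (real n * 2)" by simp
  ultimately show ?thesis
    using midpoint ln_fact_ge[of n] False by (simp add: algebra_simps, linarith)
qed

lemma ln_Gamma_half_integer_le:
  fixes m :: nat assumes "m \<ge> 1"
  shows "ln (Gamma (real m + 1/2)) \<le> 1 + real m * ln (real m) - real m"
proof -
  have "ln (Gamma (real m + 1/2)) \<le> (ln (Gamma (real m)) + ln (Gamma (real m + 1)))/2"
    using ln_Gamma_midpoint_le[of "real m" "real m + 1"] assms by (simp add: add_divide_distrib)
  moreover have "ln (Gamma (real m + 1)) = ln (fact m)"
    using Gamma_fact[of m] by (simp add: add.commute)
  moreover have "ln (Gamma (real m + 1)) = ln (real m) + ln (Gamma (real m))"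
    using assms by (simp add: ln_Gamma_plus1)
  ultimately show ?thesis
    using ln_fact_le[OF assms] by (simp add: algebra_simps)
qed

lemma x_ln_x_add_le:
  fixes N c :: real assumes N: "N \<ge> 1" and c: "c \<ge> 0"
  shows "(N+c) * ln (N+c) - (N+c) \<le> N * ln N - N + c * ln N + c * ln (1+c)"
proof -
  have "ln (N+c) = ln N + ln (1 + c/N)"
  proof -
    have "N + c = N * (1 + c/N)" using N by (simp add: field_simps)
    then show ?thesis using N c by (simp add: ln_mult_pos add_pos_nonneg)
  qed
  moreover have "ln (1 + c/N) \<le> c/N" using N c by (intro ln_add_one_self_le_self) auto
  moreover have "ln (N+c) \<le> ln N + ln (1+c)"
  proof -
    have "N + c \<le> N * (1+c)" using N c by (simp add: algebra_simps mult_le_cancel_right1)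
    then have "ln (N+c) \<le> ln (N * (1+c))" using N c by (intro ln_mono) auto
    then show ?thesis using N c by (simp add: ln_mult_pos)
  qed
  ultimately have "N * ln (N+c) \<le> N * ln N + c" and "c * ln (N+c) \<le> c * (ln N + ln (1+c))"
    using N c by (auto intro!: mult_left_mono simp: algebra_simps field_simps)
  then show ?thesis by (simp add: algebra_simps)
qed


lemma ln_Gamma_add_half_le:
  fixes N a :: nat assumes N1: "N \<ge> 1" and a2: "a \<ge> 2"
  shows "ln (Gamma (real N + real a / 2)) \<le>
     1 + ((real a - 1)/2) * ln (1 + (real a - 1)/2) + real N * ln (real N) - real N + ((real a - 1)/2) * ln (real N)"
proof (cases "even a")
  case False
  then obtain k where k: "a = 2*k+1" by (metis oddE)
  have "real N + real a / 2 = real (N + k) + 1/2" using k by simp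
  then have "ln (Gamma (real N + real a / 2)) \<le> 1 + real (N+k) * ln (real (N+k)) - real (N+k)"
    using N1 by (simp only:) (intro ln_Gamma_half_integer_le, simp)
  also have "\<dots> \<le> 1 + (real N * ln (real N) - real N + real k * ln (real N) + real k * ln (1 + real k))"
    using x_ln_x_add_le[of "real N" "real k"] N1 by simp
  finally show ?thesis using k by (simp add: algebra_simps)
next
  case True
  then obtain k where k: "a = 2*k" by (metis evenE)
  have k1: "k \<ge> 1" using k a2 by simp
  define M where "M = N + k - 1"
  have M1: "M \<ge> 1" and real_M: "real M = real N + (real k - 1)"
    using N1 k1 by (simp_all add: M_def of_nat_diff)
  have "(real N - 1) * (real k - 1) \<ge> 0" using N1 k1 by simp
  then have "real M \<le> real N * real k" unfolding real_M by (simp add: algebra_simps)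
  then have ln_M: "ln (real M) \<le> ln (real N) + ln (real k)"
    using M1 N1 k1 by (simp add: ln_mult_pos[symmetric])
  have "real N + real a / 2 = 1 + real M" using k real_M by simp
  then have "ln (Gamma (real N + real a / 2)) = ln (fact M)" by (simp add: Gamma_fact)
  also have "\<dots> \<le> 1 + (real M * ln (real M) - real M) + ln (real M) / 2"
    using ln_fact_le[OF M1] by (simp add: algebra_simps)
  also have "\<dots> \<le> 1 + real N * ln (real N) - real N + (real k - 1/2) * ln (real N) + (real k - 1/2) * ln (real k)"
    using x_ln_x_add_le[of "real N" "real k - 1"] ln_M N1 k1 unfolding real_M by (simp add: algebra_simps)
  also have "\<dots> \<le> 1 + (real k - 1/2) * ln (1 + (real k - 1/2)) + real N * ln (real N) - real N
                    + (real k - 1/2) * ln (real N)"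
    using k1 mult_left_mono[OF ln_mono[of "real k" "1 + (real k - 1/2)"], of "real k - 1/2"] by simp
  also have "real k - 1/2 = (real a - 1)/2" using k by simp
  finally show ?thesis .
qed

section \<open>The redundancy of one column\<close>

lemma ln_two_pi_le: "ln (2 * pi) \<le> 25/12"
proof -
  have "ln (2 * pi) \<le> ln (2^3)" using pi_less_4 pi_gt3 by (intro ln_mono) auto
  also have "\<dots> = 3 * ln 2" by (subst ln_realpow) simp
  also have "\<dots> \<le> 3 * (25/36)" using ln2_le_25_over_36 by simp
  finally show ?thesis by simp
qed

lemma ln_five_quarters_ge: "2/9 \<le> ln (5/4::real)"
  using ln_add_one_ge_pade[of "1/4"] by simp

lemma column_constant_le:
  fixes a :: nat assumes "a \<ge> 2"
  shows "1 + ((real a - 1)/2) * ln (1 + (real a - 1)/2) - real a * ln (5/4)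
     \<le> - ((real a - 1)/2) * ln (2 * pi) + real a ^ 2 / 4 + real a / 2"
proof -
  define u where "u = (real a - 1)/2"
  have u: "u \<ge> 1/2" using assms by (simp add: u_def)
  have ra: "real a = 2 * u + 1" by (simp add: u_def field_simps)
  have "u * ln (1 + u) \<le> u * u" using u by (intro mult_left_mono ln_add_one_self_le_self) auto
  moreover have "real a * (2/9) \<le> real a * ln (5/4)" using ln_five_quarters_ge by (intro mult_left_mono) auto
  moreover have "u * ln (2 * pi) \<le> u * (25/12)" using u ln_two_pi_le by (intro mult_left_mono) auto
  moreover have "real a ^ 2 / 4 = u * u + u + 1/4" unfolding ra by (simp add: power2_eq_square algebra_simps)
  ultimately show ?thesis unfolding u_def[symmetric] using u ra by linarith
qed

lemma ln_Gamma_half_le: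
  fixes a :: nat assumes "a \<ge> 2"
  shows "ln (Gamma (real a / 2)) \<le> 1 + ((real a - 1)/2) * ln (1 + (real a - 1)/2)"
proof -
  have "real a / 2 \<notin> \<int>\<^sub>\<le>\<^sub>0" using assms by (auto dest!: nonpos_Ints_nonpos)
  then have "Gamma (real 1 + real a / 2) = (real a / 2) * Gamma (real a / 2)"
    using Gamma_plus1[of "real a / 2"] by (simp add: add.commute)
  moreover have "1 * Gamma (real a / 2) \<le> (real a / 2) * Gamma (real a / 2)"
    using assms by (intro mult_right_mono) auto
  ultimately have "Gamma (real a / 2) \<le> Gamma (real 1 + real a / 2)" by simp
  then have "ln (Gamma (real a / 2)) \<le> ln (Gamma (real 1 + real a / 2))"
    using assms by simp
  also have "\<dots> \<le> 1 + ((real a - 1)/2) * ln (1 + (real a - 1)/2) - 1"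
    using ln_Gamma_add_half_le[of 1 a] assms by simp
  finally show ?thesis by simp
qed

lemma ln_empirical_likelihood_minus_ln_half_dirichlet_mass_le:
  fixes a t :: nat and n :: "nat \<Rightarrow> nat"
  assumes a1: "a \<ge> 1" and t1: "t \<ge> 1" and N_le: "sum n {1..a} \<le> t"
  shows "ln (empirical_likelihood a n) - ln (half_dirichlet_mass a n)
     \<le> ((real a - 1)/2) * ln (real t / (2 * pi)) + (real a ^ 2 / 4 + real a / 2)"
proof (cases "a = 1")
  case True
  then show ?thesis
    by (cases "n 1 = 0") (simp_all add: ln_empirical_likelihood ln_half_dirichlet_mass)
next
  case False
  then have a2: "a \<ge> 2" using a1 by simp
  define N where "N = sum n {1..a}"
  define s where "s = (real a - 1)/2"
  have s: "s \<ge> 0" using a1 by (simp add: s_def)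
  have likelihood: "ln (empirical_likelihood a n)
      = (\<Sum>i\<in>{1..a}. real (n i) * ln (real (n i))) - real N * ln (real N)"
  proof -
    have "n i \<le> N" if "i \<in> {1..a}" for i using that unfolding N_def by (intro member_le_sum) auto
    then have "(\<Sum>i\<in>{1..a}. real (n i) * ln (real (n i) / real N))
        = (\<Sum>i\<in>{1..a}. real (n i) * ln (real (n i)) - real (n i) * ln (real N))"
      by (intro sum.cong refl) (auto simp: ln_div algebra_simps)
    then show ?thesis
      unfolding ln_empirical_likelihood N_def[symmetric]
      by (simp add: sum_subtractf sum_distrib_right[symmetric] N_def)
  qed
  have numerator: "(\<Sum>i\<in>{1..a}. ln (Gamma (real (n i) + 1/2)))
      \<ge> real a * ln (5/4) + (\<Sum>i\<in>{1..a}. real (n i) * ln (real (n i))) - real N"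
    using sum_mono[of "{1..a}" "\<lambda>i. ln (5/4) + real (n i) * ln (real (n i)) - real (n i)"
        "\<lambda>i. ln (Gamma (real (n i) + 1/2))", OF ln_Gamma_half_integer_ge]
    by (simp add: sum.distrib sum_subtractf N_def)
  \<comment> \<open>for N = 0 the terms in N vanish, as ln 0 = 0\<close>
  have denominator: "ln (Gamma (real N + real a / 2))
      \<le> 1 + s * ln (1 + s) + real N * ln (real N) - real N + s * ln (real N)"
    using ln_Gamma_add_half_le[OF _ a2, of N] ln_Gamma_half_le[OF a2]
    unfolding s_def by (cases "N = 0") auto
  have "N \<le> t" using N_le by (simp add: N_def)
  then have "s * ln (real N) \<le> s * ln (real t)"
    using s t1 by (cases "N = 0") (auto intro!: mult_left_mono)
  moreover have "s * ln (real t / (2 * pi)) = s * ln (real t) - s * ln (2 * pi)"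
    using t1 by (simp add: ln_divide_pos right_diff_distrib)
  moreover have "1 + s * ln (1 + s) - real a * ln (5/4) \<le> - s * ln (2 * pi) + real a ^ 2 / 4 + real a / 2"
    unfolding s_def by (rule column_constant_le[OF a2])
  ultimately show ?thesis
    using likelihood numerator denominator
    unfolding ln_half_dirichlet_mass[OF a1] N_def[symmetric] s_def[symmetric] by linarith
qed

lemma log_empirical_likelihood_ratio_le:
  fixes a t :: nat and n :: "nat \<Rightarrow> nat"
  assumes "a \<ge> 1" "t \<ge> 1" "sum n {1..a} \<le> t"
  shows "log 2 (empirical_likelihood a n * half_dirichlet_mass a (\<lambda>_. 0) / half_dirichlet_mass a n)
     \<le> ((real a - 1)/2) * log 2 (real t / (2 * pi)) + log 2 (half_dirichlet_mass a (\<lambda>_. 0))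
       + (real a ^ 2 / 4 + real a / 2) * log 2 (exp 1)"
proof -
  have "ln (empirical_likelihood a n * half_dirichlet_mass a (\<lambda>_. 0) / half_dirichlet_mass a n)
      = ln (empirical_likelihood a n) - ln (half_dirichlet_mass a n) + ln (half_dirichlet_mass a (\<lambda>_. 0))"
    using empirical_likelihood_pos half_dirichlet_mass_pos[OF assms(1)]
    by (simp add: ln_divide_pos ln_mult_pos)
  then have "ln (empirical_likelihood a n * half_dirichlet_mass a (\<lambda>_. 0) / half_dirichlet_mass a n)
      \<le> ((real a - 1)/2) * ln (real t / (2 * pi)) + ln (half_dirichlet_mass a (\<lambda>_. 0))
        + (real a ^ 2 / 4 + real a / 2)"
    using ln_empirical_likelihood_minus_ln_half_dirichlet_mass_le[OF assms] by linarith
  then have "ln (empirical_likelihood a n * half_dirichlet_mass a (\<lambda>_. 0) / half_dirichlet_mass a n) / ln 2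
      \<le> (((real a - 1)/2) * ln (real t / (2 * pi)) + ln (half_dirichlet_mass a (\<lambda>_. 0))
        + (real a ^ 2 / 4 + real a / 2)) / ln 2"
    by (rule divide_right_mono) simp
  then show ?thesis
    unfolding log_def by (simp add: add_divide_distrib)
qed

lemma p_U_pos:
  assumes "a \<ge> 1" "\<forall>k\<in>{1..t}. x k \<in> {1..a}" "\<forall>k\<in>{1..t}. y k \<in> {1..b}"
  shows "p_U a b t x y > 0"
  unfolding p_U_eq_prod_half_dirichlet_mass[OF assms]
  using half_dirichlet_mass_pos[OF assms(1)] by (simp add: prod_pos)

lemma p_cond_div_p_U_le:
  assumes "a \<ge> 1" "\<forall>k\<in>{1..t}. x k \<in> {1..a}" "\<forall>k\<in>{1..t}. y k \<in> {1..b}" "\<theta> \<in> Lambda a b"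
  shows "p_cond t x y \<theta> / p_U a b t x y
    \<le> (\<Prod>j\<in>{1..b}. empirical_likelihood a (\<lambda>i. joint_count t x y i j) * half_dirichlet_mass a (\<lambda>_. 0)
                        / half_dirichlet_mass a (\<lambda>i. joint_count t x y i j))"
proof -
  have "p_cond t x y \<theta> / p_U a b t x y
      \<le> (\<Prod>j\<in>{1..b}. empirical_likelihood a (\<lambda>i. joint_count t x y i j)) / p_U a b t x y"
    using p_cond_le_prod_empirical_likelihood[OF assms(2-4)] p_U_pos[OF assms(1-3)]
    by (simp add: divide_right_mono)
  also have "\<dots> = (\<Prod>j\<in>{1..b}. empirical_likelihood a (\<lambda>i. joint_count t x y i j)
                      * half_dirichlet_mass a (\<lambda>_. 0) / half_dirichlet_mass a (\<lambda>i. joint_count t x y i j))"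
    unfolding p_U_eq_prod_half_dirichlet_mass[OF assms(1-3)] prod_dividef[symmetric]
    using half_dirichlet_mass_pos[OF assms(1)] by (intro prod.cong refl) (simp add: field_simps)
  finally show ?thesis .
qed

theorem lemma2:
  fixes a b t :: nat and x y :: "nat \<Rightarrow> nat" and \<theta>hat :: "nat \<Rightarrow> nat \<Rightarrow> real"
  assumes "a \<ge> 1" and "b \<ge> 1" and "t \<ge> 1"
    and "\<forall>k\<in>{1..t}. x k \<in> {1..a}" and "\<forall>k\<in>{1..t}. y k \<in> {1..b}"
    and "\<theta>hat \<in> Lambda a b"
    and "\<forall>\<theta>\<in>Lambda a b. p_cond t x y \<theta> \<le> p_cond t x y \<theta>hat"
  shows "log 2 (p_cond t x y \<theta>hat / p_U a b t x y)
    \<le> (real (a - 1) * real b / 2) * log 2 (real t / (2 * pi))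
      + real b * log 2 (Gamma (1/2) ^ a / Gamma (real a / 2))
      + (real a ^ 2 * real b / 4 + real a * real b / 2) * log 2 (exp 1)"
proof -
  define W where "W j = empirical_likelihood a (\<lambda>i. joint_count t x y i j) * half_dirichlet_mass a (\<lambda>_. 0)
                        / half_dirichlet_mass a (\<lambda>i. joint_count t x y i j)" for j
  have W_pos: "W j > 0" for j
    using assms(1) by (simp add: W_def empirical_likelihood_pos half_dirichlet_mass_pos)
  have "(\<lambda>_ _. 1 / real a) \<in> Lambda a b" and "p_cond t x y (\<lambda>_ _. 1 / real a) > 0"
    using assms(1) unfolding Lambda_def p_cond_def by (auto intro!: prod_pos)
  then have p_hat_pos: "p_cond t x y \<theta>hat > 0"
    using assms(7) by fastforce
  have "log 2 (p_cond t x y \<theta>hat / p_U a b t x y) \<le> log 2 (\<Prod>j\<in>{1..b}. W j)"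
    using p_cond_div_p_U_le[OF assms(1,4,5,6)] p_U_pos[OF assms(1,4,5)] p_hat_pos W_pos
    unfolding W_def by (simp add: prod_pos)
  also have "\<dots> = (\<Sum>j\<in>{1..b}. log 2 (W j))"
    using W_pos unfolding log_def by (simp add: ln_prod sum_divide_distrib less_imp_neq[symmetric])
  also have "\<dots> \<le> (\<Sum>j\<in>{1..b}. ((real a - 1)/2) * log 2 (real t / (2 * pi))
      + log 2 (half_dirichlet_mass a (\<lambda>_. 0)) + (real a ^ 2 / 4 + real a / 2) * log 2 (exp 1))"
    unfolding W_def
    by (intro sum_mono log_empirical_likelihood_ratio_le[OF assms(1,3) sum_joint_count_le[OF assms(4)]])
  finally show ?thesis
    using assms(1) by (simp add: half_dirichlet_mass_def of_nat_diff algebra_simps)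
qed

end
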